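(* Let $F$ be a random variable with $0\le F\le M$ for some $M>0$, and suppose $\mathbb{E}[F]\le2e^{-M}$. Then $\mathbb{E}[e^F]\le1+\sqrt{8e^M\mathbb{E}[F]}$. *)

theory Defs
  imports "HOL-Probability.Probability"
begin

end

theory Submission
  imports Defs
begin

text \<open>On \<open>[0, M]\<close> the exponential lies below the line \<open>1 + e\<^sup>M x\<close>, so
  \<open>E[e\<^sup>F] \<le> 1 + t\<close> with \<open>t = e\<^sup>M E[F]\<close>. The hypothesis on \<open>E[F]\<close> says \<open>t \<le> 2\<close>,
  and then \<open>t\<^sup>2 \<le> 8 t\<close>, i.e. \<open>t \<le> sqrt (8 t)\<close>.\<close>

lemma exp_le_1_plus_mult_exp:
  fixes x :: real
  shows "exp x \<le> 1 + x * exp x"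
proof -
  have "(1 - x) * exp x \<le> exp (- x) * exp x"
    using exp_ge_add_one_self[of "- x"] by (intro mult_right_mono) auto
  then show ?thesis
    by (simp add: algebra_simps exp_minus_inverse)
qed

lemma exp_le_1_plus_exp_bound_mult:
  fixes x M :: real
  assumes "0 \<le> x" "x \<le> M"
  shows "exp x \<le> 1 + exp M * x"
proof -
  have "x * exp x \<le> exp M * x"
    using assms by (simp add: mult.commute mult_left_mono)
  then show ?thesis
    using exp_le_1_plus_mult_exp[of x] by linarith
qed

lemma le_sqrt_mult_if_le:
  fixes t c :: real
  assumes "0 \<le> t" "t \<le> c"
  shows "t \<le> sqrt (c * t)"
proof (rule real_le_rsqrt)
  show "t\<^sup>2 \<le> c * t"
    using assms by (simp add: power2_eq_square mult_right_mono)
qed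

lemma (in prob_space) expectation_exp_le_linear:
  fixes F :: "'a \<Rightarrow> real"
  assumes F: "F \<in> borel_measurable M" and bounds: "\<forall>x\<in>space M. 0 \<le> F x \<and> F x \<le> c"
  shows "expectation (\<lambda>x. exp (F x)) \<le> 1 + exp c * expectation F"
proof -
  have int_F: "integrable M F"
    using F bounds by (intro integrable_const_bound[where B = c]) (auto intro!: AE_I2)
  have int_exp_F: "integrable M (\<lambda>x. exp (F x))"
    using F bounds by (intro integrable_const_bound[where B = "exp c"]) (auto intro!: AE_I2)
  have "expectation (\<lambda>x. exp (F x)) \<le> expectation (\<lambda>x. 1 + exp c * F x)"
    using int_F int_exp_F bounds
    by (intro integral_mono) (auto intro: exp_le_1_plus_exp_bound_mult)
  also have "\<dots> = 1 + exp c * expectation F"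
    using int_F by (simp add: prob_space)
  finally show ?thesis .
qed

theorem lemma8:
  fixes P :: "'a measure" and F :: "'a \<Rightarrow> real" and M :: real
  assumes "prob_space P"
    and "F \<in> borel_measurable P"
    and "M > 0"
    and "\<forall>x\<in>space P. 0 \<le> F x \<and> F x \<le> M"
    and "prob_space.expectation P F \<le> 2 * exp (- M)"
  shows "prob_space.expectation P (\<lambda>x. exp (F x)) \<le> 1 + sqrt (8 * exp M * prob_space.expectation P F)"
proof -
  interpret prob_space P by fact
  define t where "t = exp M * expectation F"
  have "0 \<le> t"
    unfolding t_def using assms(4) by (auto intro!: integral_nonneg_AE AE_I2)
  moreover have "t \<le> 2"
    using mult_left_mono[OF assms(5), of "exp M"]
    by (simp add: t_def exp_minus field_simps)
  ultimately have "t \<le> sqrt (8 * t)"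
    by (intro le_sqrt_mult_if_le) auto
  then show ?thesis
    using expectation_exp_le_linear[OF assms(2,4)] by (simp add: t_def mult.assoc)
qed

end
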